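(* Let $\alpha\in(0,1)$, $\lambda>0$, and let $p\in L^\infty(0,T)$ satisfy $p_0\le p(t)\le p_1$ for $t\in(0,T)$ with constants $p_0,p_1>0$. If $z\in W^{1,\infty}(0,T)$ satisfies $z(t)\ge0$ and $$\partial_tz(t)+p(t)\partial_t^\alpha z(t)+\lambda z(t)\le0,\qquad 0<t<T,$$ then $\partial_t^\alpha z(t)\le0$ for $0<t<T$.
   Context: $\partial_t^\alpha\varphi(t)=\frac{1}{\Gamma(1-\alpha)}\int_0^t(t-\tau)^{-\alpha}\varphi'(\tau)d\tau$ is the Caputo derivative. *)

theory Defs
  imports "HOL-Analysis.Analysis"
begin

text \<open>z \<in> W^{1,\<infinity>}(0,T) with (weak) derivative dz: dz is measurable and essentially
  bounded on (0,T), and z is the (continuous representative) primitive of dz on [0,T].\<close>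
definition W1inf :: "real \<Rightarrow> (real \<Rightarrow> real) \<Rightarrow> (real \<Rightarrow> real) \<Rightarrow> bool" where
  "W1inf T z dz \<longleftrightarrow>
     set_borel_measurable lborel {0<..<T} dz \<and>
     (\<exists>C. AE t in lborel. t \<in> {0<..<T} \<longrightarrow> \<bar>dz t\<bar> \<le> C) \<and>
     (\<forall>t\<in>{0..T}. z t = z 0 + (LBINT s:{0..t}. dz s))"

definition caputo :: "real \<Rightarrow> (real \<Rightarrow> real) \<Rightarrow> real \<Rightarrow> real" where
  "caputo \<alpha> dz t = (1 / Gamma (1 - \<alpha>)) * (LBINT \<tau>:{0<..<t}. (t - \<tau>) powr (-\<alpha>) * dz \<tau>)"

end

theory Submission
  imports Defs
begin

(* Write I(t) for the integral of (t - tau) powr (-alpha) * z'(tau) over (0, t), i.e. Gamma(1 - alpha)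
   times the Caputo derivative. I is Hoelder continuous, so if it were positive somewhere it would
   attain a positive maximum M = I(m) on some [0, t] with m > 0 and stay positive on some [s, m].
   There the differential inequality forces z' <= 0, so the part of I(m) coming from (s, m) is
   nonpositive. For the part coming from (0, s), Fubini with a nonnegative weight phi satisfying
   int_tau^s phi(r) (r - tau)^(-alpha) dr = B(1 - alpha, alpha) (m - tau)^(-alpha) expresses it as
   an integral of I over (0, s) against phi, whose mass is at most B(1 - alpha, alpha) (s/m)^alpha.
   Hence M = I(m) <= (s/m)^alpha M < M. *)

lemma set_lebesgue_integral_of_has_integral_nonneg:
  fixes f :: "real \<Rightarrow> real"
  assumes I: "(f has_integral I) {c..t}" and nonneg: "\<And>x. x \<in> {c..t} \<Longrightarrow> 0 \<le> f x"
    and meas: "f \<in> borel_measurable borel"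
  shows "set_integrable lborel {c..t} f" "(LBINT x:{c..t}. f x) = I"
proof -
  have "f absolutely_integrable_on {c..t}"
    using I nonneg by (intro nonnegative_absolutely_integrable_1) auto
  then show integrable: "set_integrable lborel {c..t} f"
    unfolding set_integrable_def
    by (subst integrable_completion[symmetric]) (use meas in auto)
  show "(LBINT x:{c..t}. f x) = I"
    using set_borel_integral_eq_integral[OF integrable] I by (simp add: integral_unique)
qed

lemma set_integrable_Icc_iff_Ioo:
  fixes f :: "real \<Rightarrow> real"
  shows "set_integrable lborel {c..t} f \<longleftrightarrow> set_integrable lborel {c<..<t} f"
  by (rule set_integrable_discrete_difference[where X="{c,t}"]) auto

lemma set_integral_Icc_eq_Ioo:
  fixes f :: "real \<Rightarrow> real"
  shows "(LBINT x:{c..t}. f x) = (LBINT x:{c<..<t}. f x)"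
  by (rule set_integral_discrete_difference[where X="{c,t}"]) auto

lemma set_integral_Ioo_split:
  fixes f :: "real \<Rightarrow> real"
  assumes f: "set_integrable lborel {c<..<t} f" and m: "c \<le> m" "m \<le> t"
  shows "set_integrable lborel {c<..<m} f" "set_integrable lborel {m<..<t} f"
    "(LBINT x:{c<..<t}. f x) = (LBINT x:{c<..<m}. f x) + (LBINT x:{m<..<t}. f x)"
proof -
  show left: "set_integrable lborel {c<..<m} f" and right: "set_integrable lborel {m<..<t} f"
    by (rule set_integrable_subset[OF f]; use m in auto)+
  have "(LBINT x:{c<..<t}. f x) = (LBINT x:{c<..<m} \<union> {m<..<t}. f x)"
    by (rule set_integral_discrete_difference[where X="{m}"]) (use m in auto)
  also have "\<dots> = (LBINT x:{c<..<m}. f x) + (LBINT x:{m<..<t}. f x)"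
    by (rule set_integral_Un[OF _ left right]) auto
  finally show "(LBINT x:{c<..<t}. f x) = (LBINT x:{c<..<m}. f x) + (LBINT x:{m<..<t}. f x)" .
qed

lemma set_integral_powr_kernel:
  fixes a c t :: real
  assumes a: "0 < a" "a < 1" and ct: "c \<le> t"
  shows "set_integrable lborel {c<..<t} (\<lambda>x. (t - x) powr (-a))"
    "(LBINT x:{c<..<t}. (t - x) powr (-a)) = (t - c) powr (1 - a) / (1 - a)"
proof -
  define F where "F x = - ((t - x) powr (1 - a) / (1 - a))" for x
  have "((\<lambda>x. (t - x) powr (-a)) has_integral (F t - F c)) {c..t}"
  proof (rule fundamental_theorem_of_calculus_interior[OF ct])
    show "continuous_on {c..t} F" unfolding F_def using a
      by (intro continuous_intros continuous_on_powr') auto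
    show "(F has_vector_derivative (t - x) powr (-a)) (at x)" if "x \<in> {c<..<t}" for x
    proof -
      have "(F has_real_derivative (- ((-(1-a) * (t - x) powr (-a)) / (1-a)))) (at x)"
        unfolding F_def using that
        by (intro derivative_intros DERIV_cdivide)
           (auto intro!: derivative_eq_intros simp: algebra_simps)
      moreover have "- ((-(1-a) * (t - x) powr (-a)) / (1-a)) = (t - x) powr (-a)"
        using a by (simp add: field_simps)
      ultimately show ?thesis
        by (simp add: has_real_derivative_iff_has_vector_derivative)
    qed
  qed
  moreover have "F t - F c = (t - c) powr (1 - a) / (1 - a)" unfolding F_def by simp
  ultimately show "set_integrable lborel {c<..<t} (\<lambda>x. (t - x) powr (-a))"
    "(LBINT x:{c<..<t}. (t - x) powr (-a)) = (t - c) powr (1 - a) / (1 - a)"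
    using set_lebesgue_integral_of_has_integral_nonneg[of "\<lambda>x. (t - x) powr (-a)"]
    by (auto simp: set_integrable_Icc_iff_Ioo set_integral_Icc_eq_Ioo)
qed

lemma set_integral_powr_kernel_diff:
  fixes a t t' :: real
  assumes a: "0 < a" "a < 1" and tt: "0 \<le> t'" "t' \<le> t"
  shows "set_integrable lborel {0<..<t'} (\<lambda>\<tau>. (t' - \<tau>) powr (-a) - (t - \<tau>) powr (-a))"
    "(LBINT \<tau>:{0<..<t'}. (t' - \<tau>) powr (-a) - (t - \<tau>) powr (-a)) \<le> (t - t') powr (1 - a) / (1 - a)"
proof -
  note whole = set_integral_powr_kernel[OF a, of 0 t] and short = set_integral_powr_kernel[OF a, of 0 t']
  note split = set_integral_Ioo_split[OF whole(1), of t']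
  show integrable: "set_integrable lborel {0<..<t'} (\<lambda>\<tau>. (t' - \<tau>) powr (-a) - (t - \<tau>) powr (-a))"
    using short(1) split(1) tt by auto
  have "(LBINT \<tau>:{0<..<t'}. (t' - \<tau>) powr (-a) - (t - \<tau>) powr (-a))
      = (t' powr (1 - a) - t powr (1 - a) + (t - t') powr (1 - a)) / (1 - a)"
    using tt whole short split set_integral_powr_kernel(2)[OF a tt(2)]
    by (simp add: set_integral_diff(2) diff_divide_distrib add_divide_distrib)
  also have "\<dots> \<le> (t - t') powr (1 - a) / (1 - a)"
    using tt a powr_mono2[of "1 - a" t' t] by (intro divide_right_mono) auto
  finally show "(LBINT \<tau>:{0<..<t'}. (t' - \<tau>) powr (-a) - (t - \<tau>) powr (-a)) \<le> (t - t') powr (1 - a) / (1 - a)" .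
qed

lemma set_integral_mult_bounded:
  fixes D g :: "real \<Rightarrow> real"
  assumes [measurable]: "D \<in> borel_measurable borel" "S \<in> sets borel" "g \<in> borel_measurable borel"
    and bounded: "AE x in lborel. \<bar>D x\<bar> \<le> B"
    and g: "set_integrable lborel S g" and nonneg: "\<And>x. x \<in> S \<Longrightarrow> 0 \<le> g x"
  shows "set_integrable lborel S (\<lambda>x. g x * D x)"
    "\<bar>LBINT x:S. g x * D x\<bar> \<le> B * (LBINT x:S. g x)"
proof -
  have Bg: "set_integrable lborel S (\<lambda>x. B * g x)"
    using g by (rule set_integrable_mult_right)
  have le: "AE x in lborel. x \<in> S \<longrightarrow> \<bar>g x * D x\<bar> \<le> B * g x"
    using bounded by eventually_elim
      (auto simp: abs_mult nonneg abs_of_nonneg mult.commute[of B] intro: mult_left_mono)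
  show gD: "set_integrable lborel S (\<lambda>x. g x * D x)"
    using le by (intro set_integrable_bound[OF Bg]) (auto simp: set_borel_measurable_def elim!: eventually_mono)
  have "\<bar>LBINT x:S. g x * D x\<bar> \<le> (LBINT x:S. \<bar>g x * D x\<bar>)"
    using set_integral_norm_bound[OF gD] by simp
  also have "\<dots> \<le> (LBINT x:S. B * g x)"
    using le by (intro set_integral_mono_AE[OF set_integrable_abs[OF gD] Bg]) auto
  finally show "\<bar>LBINT x:S. g x * D x\<bar> \<le> B * (LBINT x:S. g x)"
    by simp
qed

definition abel_weight :: "real \<Rightarrow> real \<Rightarrow> real \<Rightarrow> real \<Rightarrow> real" where
  "abel_weight a s t r = (s - r) powr (a - 1) * (t - s) powr (1 - a) / (t - r)"

lemma abel_weight_nonneg: "r \<le> t \<Longrightarrow> 0 \<le> abel_weight a s t r"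
  unfolding abel_weight_def by (auto intro!: divide_nonneg_nonneg mult_nonneg_nonneg)

lemma abel_weight_measurable [measurable]: "abel_weight a s t \<in> borel_measurable borel"
  unfolding abel_weight_def by measurable

text \<open>The substitution \<open>y = (t - s)(r - \<tau>) / ((s - \<tau>)(t - r))\<close> maps \<open>[\<tau>, s]\<close> onto \<open>[0, 1]\<close>
  and turns the weighted kernel into the integrand of \<open>Beta (1 - a) a\<close>.\<close>

lemma abel_weight_beta_substitution:
  fixes a \<tau> r s t :: real
  assumes "\<tau> < r" "r < s" "s < t"
  defines "y \<equiv> (t - s) * (r - \<tau>) / ((s - \<tau>) * (t - r))"
  shows "y powr (-a) * (1 - y) powr (a - 1) * ((t - s) * (t - \<tau>) / ((s - \<tau>) * (t - r)^2))
    = (t - \<tau>) powr a * (abel_weight a s t r * (r - \<tau>) powr (-a))"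
proof -
  define A u v w W Q where "A = t - s" "u = r - \<tau>" "v = s - r" "w = t - r" "W = t - \<tau>" "Q = s - \<tau>"
  have pos: "0 < A" "0 < u" "0 < v" "0 < w" "0 < W" "0 < Q"
    unfolding A_u_v_w_W_Q_def using assms by auto
  have "1 - A * u / (Q * w) = (Q * w - A * u) / (Q * w)"
    using pos by (simp add: field_simps)
  also have "Q * w - A * u = v * W"
    unfolding A_u_v_w_W_Q_def by (simp add: algebra_simps)
  finally have e: "1 - A * u / (Q * w) = v * W / (Q * w)" .
  have "(A * u / (Q * w)) powr (-a) * (1 - A * u / (Q * w)) powr (a - 1) * (A * W / (Q * w^2))
      = W powr a * (v powr (a - 1) * A powr (1 - a) / w) * u powr (-a)"
    unfolding e using pos by (simp add: powr_divide powr_mult powr_minus powr_diff field_simps power2_eq_square)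
  then show ?thesis
    unfolding y_def abel_weight_def A_u_v_w_W_Q_def by (simp add: mult_ac)
qed

lemma nn_integral_beta_substitution:
  fixes a \<tau> s t :: real
  assumes a: "0 < a" "a < 1" and ts: "\<tau> < s" "s < t"
  defines "g \<equiv> \<lambda>r. (t - s) * (r - \<tau>) / ((s - \<tau>) * (t - r))"
    and "g' \<equiv> \<lambda>r. (t - s) * (t - \<tau>) / ((s - \<tau>) * (t - r)^2)"
  shows "(\<integral>\<^sup>+r. ennreal (g r powr (-a) * (1 - g r) powr (a - 1) * g' r * indicator {\<tau>..s} r) \<partial>lborel)
    = ennreal (Beta (1 - a) a)"
proof -
  define f where "f y = y powr (-a) * (1 - y) powr (a - 1)" for y :: real
  have [measurable]: "f \<in> borel_measurable borel" "g \<in> borel_measurable borel" "g' \<in> borel_measurable borel"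
    unfolding f_def g_def g'_def by measurable
  have "(\<integral>\<^sup>+y. f y * indicator {g \<tau>..g s} y \<partial>lborel) =
        (\<integral>\<^sup>+r. f (g r) * g' r * indicator {\<tau>..s} r \<partial>lborel)"
  proof (rule nn_integral_substitution)
    show "set_borel_measurable borel {g \<tau>..g s} f"
      unfolding set_borel_measurable_def by measurable
    show "(g has_real_derivative g' x) (at x)" if "x \<in> {\<tau>..s}" for x
    proof -
      have "x < t" using that ts by auto
      have "((\<lambda>r. (r - \<tau>) / (t - r)) has_real_derivative (t - \<tau>) / (t - x)^2) (at x)"
        by (rule DERIV_cong, (rule derivative_eq_intros refl)+)
          (use \<open>x < t\<close> in \<open>auto simp: field_simps power2_eq_square\<close>)
      from DERIV_cmult[OF this, of "(t - s) / (s - \<tau>)"] show ?thesis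
        unfolding g_def g'_def by (simp add: field_simps)
    qed
    show "continuous_on {\<tau>..s} g'" unfolding g'_def using ts
      by (intro continuous_intros) auto
    show "0 \<le> g' x" if "x \<in> {\<tau>..s}" for x unfolding g'_def using ts that by auto
  qed (use ts in auto)
  moreover have "g \<tau> = 0" "g s = 1" unfolding g_def using ts by auto
  moreover have "(\<integral>\<^sup>+y. f y * indicator {0..1} y \<partial>lborel) = ennreal (Beta (1 - a) a)"
  proof -
    have "(f has_integral Beta (1 - a) a) {0..1}"
      using has_integral_Beta_real[of "1 - a" a] a unfolding f_def by simp
    from nn_integral_has_integral_lebesgue[OF _ this]
    show ?thesis unfolding f_def by (auto simp: mult.commute)
  qed
  ultimately show ?thesis unfolding f_def by simp
qed

lemma Beta_pos_real: "0 < a \<Longrightarrow> a < 1 \<Longrightarrow> 0 < Beta (1 - a) (a::real)"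
  by (simp add: Beta_def)

lemma set_integral_abel_weight_kernel:
  fixes a \<tau> s t :: real
  assumes a: "0 < a" "a < 1" and ts: "\<tau> < s" "s < t"
  shows "set_integrable lborel {\<tau><..<s} (\<lambda>r. abel_weight a s t r * (r - \<tau>) powr (-a))"
    "(LBINT r:{\<tau><..<s}. abel_weight a s t r * (r - \<tau>) powr (-a)) = Beta (1 - a) a * (t - \<tau>) powr (-a)"
proof -
  define h where "h r = abel_weight a s t r * (r - \<tau>) powr (-a) * indicator {\<tau>..s} r" for r
  define g where "g r = (t - s) * (r - \<tau>) / ((s - \<tau>) * (t - r))" for r
  define g' where "g' r = (t - s) * (t - \<tau>) / ((s - \<tau>) * (t - r)^2)" for r
  have [measurable]: "h \<in> borel_measurable borel" "g \<in> borel_measurable borel" "g' \<in> borel_measurable borel"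
    unfolding h_def g_def g'_def by measurable
  have Beta: "0 < Beta (1 - a) a" using a by (rule Beta_pos_real)
  have h_nonneg: "0 \<le> h r" for r
    unfolding h_def using abel_weight_nonneg[of r t a s] ts by (auto simp: indicator_def)
  have "AE r in lborel. ennreal (h r) = ennreal ((t - \<tau>) powr (-a)) *
      ennreal (g r powr (-a) * (1 - g r) powr (a - 1) * g' r * indicator {\<tau>..s} r)"
    using AE_lborel_singleton[of \<tau>] AE_lborel_singleton[of s]
  proof eventually_elim
    case (elim r)
    show ?case
    proof (cases "r \<in> {\<tau><..<s}")
      case True
      have "g r powr (-a) * (1 - g r) powr (a - 1) * g' r
          = (t - \<tau>) powr a * (abel_weight a s t r * (r - \<tau>) powr (-a))"
        using abel_weight_beta_substitution[of \<tau> r s t a] True ts unfolding g_def g'_def by simp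
      then have "h r = (t - \<tau>) powr (-a) * (g r powr (-a) * (1 - g r) powr (a - 1) * g' r)"
        using True ts unfolding h_def by (simp add: powr_minus)
      then show ?thesis using True by (simp add: ennreal_mult')
    next
      case False
      with elim have "r \<notin> {\<tau>..s}" by auto
      then show ?thesis by (simp add: h_def)
    qed
  qed
  then have "(\<integral>\<^sup>+r. ennreal (h r) \<partial>lborel) = ennreal ((t - \<tau>) powr (-a)) *
      (\<integral>\<^sup>+r. ennreal (g r powr (-a) * (1 - g r) powr (a - 1) * g' r * indicator {\<tau>..s} r) \<partial>lborel)"
    by (subst nn_integral_cmult[symmetric]) (auto intro: nn_integral_cong_AE)
  also have "\<dots> = ennreal (Beta (1 - a) a * (t - \<tau>) powr (-a))"
    unfolding g_def g'_def nn_integral_beta_substitution[OF a ts]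
    using Beta by (simp add: ennreal_mult'[symmetric] mult.commute)
  finally have nn: "(\<integral>\<^sup>+r. ennreal (h r) \<partial>lborel) = ennreal (Beta (1 - a) a * (t - \<tau>) powr (-a))" .
  have "integrable lborel h"
    by (rule integrableI_nn_integral_finite[OF _ _ nn]) (auto simp: h_nonneg)
  moreover have "integral\<^sup>L lborel h = Beta (1 - a) a * (t - \<tau>) powr (-a)"
    using integral_eq_nn_integral[of h lborel] nn h_nonneg Beta ts by simp
  ultimately have "set_integrable lborel {\<tau>..s} (\<lambda>r. abel_weight a s t r * (r - \<tau>) powr (-a))"
    "(LBINT r:{\<tau>..s}. abel_weight a s t r * (r - \<tau>) powr (-a)) = Beta (1 - a) a * (t - \<tau>) powr (-a)"
    unfolding set_integrable_def set_lebesgue_integral_def h_def by (simp_all add: mult.commute)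
  then show "set_integrable lborel {\<tau><..<s} (\<lambda>r. abel_weight a s t r * (r - \<tau>) powr (-a))"
    "(LBINT r:{\<tau><..<s}. abel_weight a s t r * (r - \<tau>) powr (-a)) = Beta (1 - a) a * (t - \<tau>) powr (-a)"
    by (simp_all add: set_integrable_Icc_iff_Ioo set_integral_Icc_eq_Ioo)
qed

lemma set_integral_abel_weight_le:
  fixes a s t :: real
  assumes a: "0 < a" "a < 1" and ts: "0 < s" "s < t"
  shows "set_integrable lborel {0<..<s} (abel_weight a s t)"
    "(LBINT r:{0<..<s}. abel_weight a s t r) \<le> Beta (1 - a) a * (s / t) powr a"
proof -
  note kernel = set_integral_abel_weight_kernel[OF a ts]
  have scaled: "set_integrable lborel {0<..<s} (\<lambda>r. s powr a * (abel_weight a s t r * r powr (-a)))"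
    using kernel by (intro set_integrable_mult_right) auto
  have le: "abel_weight a s t r \<le> s powr a * (abel_weight a s t r * r powr (-a))" if "r \<in> {0<..<s}" for r
  proof -
    have "s powr (-a) \<le> r powr (-a)" using that a by (intro powr_mono2') auto
    then have "1 \<le> s powr a * r powr (-a)" using that ts by (simp add: powr_minus field_simps)
    then have "abel_weight a s t r * 1 \<le> abel_weight a s t r * (s powr a * r powr (-a))"
      using abel_weight_nonneg[of r t a s] that ts by (intro mult_left_mono) auto
    then show ?thesis by (simp add: mult_ac)
  qed
  show integrable: "set_integrable lborel {0<..<s} (abel_weight a s t)"
    using le abel_weight_nonneg[of _ t a s] ts
    by (intro set_integrable_bound[OF scaled])
       (auto intro!: AE_I2 simp: set_borel_measurable_def abs_of_nonneg)
  have "(LBINT r:{0<..<s}. abel_weight a s t r) \<le> (LBINT r:{0<..<s}. s powr a * (abel_weight a s t r * r powr (-a)))"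
    by (rule set_integral_mono[OF integrable scaled le])
  also have "\<dots> = s powr a * (Beta (1 - a) a * t powr (-a))"
    using kernel by (simp add: set_integral_mult_right)
  also have "\<dots> = Beta (1 - a) a * (s / t) powr a"
    using ts by (simp add: powr_divide powr_minus field_simps)
  finally show "(LBINT r:{0<..<s}. abel_weight a s t r) \<le> Beta (1 - a) a * (s / t) powr a" .
qed

definition abel_transform :: "real \<Rightarrow> (real \<Rightarrow> real) \<Rightarrow> real \<Rightarrow> real" where
  "abel_transform a D r = (LBINT \<tau>:{0<..<r}. (r - \<tau>) powr (-a) * D \<tau>)"

lemma abel_transform_0 [simp]: "abel_transform a D 0 = 0"
  unfolding abel_transform_def set_lebesgue_integral_def by simp

definition abel_fubini_integrand :: "real \<Rightarrow> (real \<Rightarrow> real) \<Rightarrow> real \<Rightarrow> real \<Rightarrow> real \<Rightarrow> real \<Rightarrow> real" where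
  "abel_fubini_integrand a D s t r \<tau> =
     (if 0 < \<tau> \<and> \<tau> < r \<and> r < s then abel_weight a s t r * ((r - \<tau>) powr (-a) * D \<tau>) else 0)"

lemma abel_fubini_integrand_outside:
  "\<not> (0 < r \<and> r < s) \<Longrightarrow> abel_fubini_integrand a D s t r = (\<lambda>_. 0)"
  by (auto simp: abel_fubini_integrand_def fun_eq_iff)

locale bounded_abel_transform =
  fixes a B :: real and D :: "real \<Rightarrow> real"
  assumes order: "0 < a" "a < 1"
    and measurable_D [measurable]: "D \<in> borel_measurable borel"
    and bounded_D: "AE x in lborel. \<bar>D x\<bar> \<le> B"
    and bound_nonneg: "0 \<le> B"
begin

lemma set_integral_kernel_bound:
  assumes "c \<le> r"
  shows "set_integrable lborel {c<..<r} (\<lambda>\<tau>. (r - \<tau>) powr (-a) * D \<tau>)"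
    "\<bar>LBINT \<tau>:{c<..<r}. (r - \<tau>) powr (-a) * D \<tau>\<bar> \<le> B * ((r - c) powr (1 - a) / (1 - a))"
  using set_integral_mult_bounded[OF measurable_D _ _ bounded_D set_integral_powr_kernel(1)[OF order assms]]
    set_integral_powr_kernel(2)[OF order assms] by auto

lemma abel_transform_holder:
  assumes "0 \<le> t'" "t' \<le> t"
  shows "\<bar>abel_transform a D t - abel_transform a D t'\<bar> \<le> 2 * B / (1 - a) * (t - t') powr (1 - a)"
proof -
  let ?K = "\<lambda>r \<tau>. (r - \<tau>) powr (-a)"
  note split = set_integral_Ioo_split[OF set_integral_kernel_bound(1)[of 0 t], of t']
  note diff = set_integral_powr_kernel_diff[OF order assms]
  have diff_nonneg: "0 \<le> ?K t' \<tau> - ?K t \<tau>" if "\<tau> \<in> {0<..<t'}" for \<tau>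
    using that assms order by (auto intro!: powr_mono2')
  have diff_D: "set_integrable lborel {0<..<t'} (\<lambda>\<tau>. (?K t' \<tau> - ?K t \<tau>) * D \<tau>)"
    "\<bar>LBINT \<tau>:{0<..<t'}. (?K t' \<tau> - ?K t \<tau>) * D \<tau>\<bar> \<le> B * (LBINT \<tau>:{0<..<t'}. ?K t' \<tau> - ?K t \<tau>)"
    using set_integral_mult_bounded[OF measurable_D _ _ bounded_D diff(1) diff_nonneg] by auto
  have "(LBINT \<tau>:{0<..<t'}. (?K t' \<tau> - ?K t \<tau>) * D \<tau>)
      = abel_transform a D t' - (LBINT \<tau>:{0<..<t'}. ?K t \<tau> * D \<tau>)"
    unfolding abel_transform_def left_diff_distrib
    using set_integral_kernel_bound(1)[of 0 t'] split(1) assms by (simp add: set_integral_diff(2))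
  then have "abel_transform a D t - abel_transform a D t'
      = (LBINT \<tau>:{t'<..<t}. ?K t \<tau> * D \<tau>) - (LBINT \<tau>:{0<..<t'}. (?K t' \<tau> - ?K t \<tau>) * D \<tau>)"
    using split(3) assms unfolding abel_transform_def by simp
  then have "\<bar>abel_transform a D t - abel_transform a D t'\<bar>
      \<le> \<bar>LBINT \<tau>:{t'<..<t}. ?K t \<tau> * D \<tau>\<bar> + \<bar>LBINT \<tau>:{0<..<t'}. (?K t' \<tau> - ?K t \<tau>) * D \<tau>\<bar>"
    by (simp only: abs_triangle_ineq4)
  also have "\<dots> \<le> B * ((t - t') powr (1 - a) / (1 - a)) + B * ((t - t') powr (1 - a) / (1 - a))"
  proof (rule add_mono)
    show "\<bar>LBINT \<tau>:{t'<..<t}. ?K t \<tau> * D \<tau>\<bar> \<le> B * ((t - t') powr (1 - a) / (1 - a))"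
      using set_integral_kernel_bound(2) assms by simp
    show "\<bar>LBINT \<tau>:{0<..<t'}. (?K t' \<tau> - ?K t \<tau>) * D \<tau>\<bar> \<le> B * ((t - t') powr (1 - a) / (1 - a))"
      using diff_D(2) mult_left_mono[OF diff(2) bound_nonneg] by (rule order_trans)
  qed
  finally show ?thesis by (simp add: field_simps)
qed

lemma continuous_on_abel_transform: "continuous_on {0..} (abel_transform a D)"
  unfolding continuous_on_def
proof
  fix x :: real assume x: "x \<in> {0..}"
  have bound: "norm (abel_transform a D y - abel_transform a D x) \<le> 2 * B / (1 - a) * \<bar>y - x\<bar> powr (1 - a)"
    if "y \<in> {0..}" for y
  proof (cases "x \<le> y")
    case True
    then show ?thesis using abel_transform_holder[of x y] x by auto
  next
    case False
    then show ?thesis using abel_transform_holder[of y x] that by (auto simp: abs_minus_commute)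
  qed
  have "((\<lambda>y. abel_transform a D y - abel_transform a D x) \<longlongrightarrow> 0) (at x within {0..})"
  proof (rule Lim_null_comparison)
    show "\<forall>\<^sub>F y in at x within {0..}.
        norm (abel_transform a D y - abel_transform a D x) \<le> 2 * B / (1 - a) * \<bar>y - x\<bar> powr (1 - a)"
      using bound by (auto simp: eventually_at_filter)
    have "((\<lambda>y. 2 * B / (1 - a) * \<bar>y - x\<bar> powr (1 - a)) \<longlongrightarrow> 2 * B / (1 - a) * \<bar>x - x\<bar> powr (1 - a))
        (at x within {0..})"
      using order by (intro tendsto_intros tendsto_powr') auto
    then show "((\<lambda>y. 2 * B / (1 - a) * \<bar>y - x\<bar> powr (1 - a)) \<longlongrightarrow> 0) (at x within {0..})"
      by simp
  qed
  then show "(abel_transform a D \<longlongrightarrow> abel_transform a D x) (at x within {0..})"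
    by (simp add: Lim_null[symmetric])
qed

lemma abel_fubini_integrand_measurable [measurable]:
  "case_prod (abel_fubini_integrand a D s t) \<in> borel_measurable (lborel \<Otimes>\<^sub>M lborel)"
  unfolding abel_fubini_integrand_def case_prod_beta by measurable

lemma integrable_abel_fubini_integrand:
  assumes st: "0 < s" "s < t"
  shows "integrable (lborel \<Otimes>\<^sub>M lborel) (case_prod (abel_fubini_integrand a D s t))"
proof (rule lborel_pair.Fubini_integrable)
  let ?F = "abel_fubini_integrand a D s t"
  let ?C = "B * (s powr (1 - a) / (1 - a))"
  have inner_bound: "(\<integral>\<tau>. norm (?F r \<tau>) \<partial>lborel) \<le> indicator {0<..<s} r * (abel_weight a s t r * ?C)" for r
  proof (cases "0 < r \<and> r < s")
    case True
    have weight: "0 \<le> abel_weight a s t r" using True st by (intro abel_weight_nonneg) auto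
    have "(\<integral>\<tau>. norm (?F r \<tau>) \<partial>lborel)
        = abel_weight a s t r * (LBINT \<tau>:{0<..<r}. (r - \<tau>) powr (-a) * \<bar>D \<tau>\<bar>)"
      unfolding set_lebesgue_integral_def using True weight
      by (subst integral_mult_right_zero[symmetric], intro Bochner_Integration.integral_cong)
         (auto simp: abel_fubini_integrand_def indicator_def abs_mult)
    also have "\<dots> \<le> abel_weight a s t r * (B * (r powr (1 - a) / (1 - a)))"
      using bounded_abel_transform.set_integral_kernel_bound(2)[of a B "\<lambda>x. \<bar>D x\<bar>" 0 r] True
        bounded_D order bound_nonneg weight
      by (intro mult_left_mono) (auto simp: bounded_abel_transform_def)
    also have "\<dots> \<le> abel_weight a s t r * ?C"
      using True order bound_nonneg weight
      by (intro mult_left_mono divide_right_mono powr_mono2) auto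
    finally show ?thesis using True by simp
  next
    case False
    then show ?thesis by (simp add: abel_fubini_integrand_outside)
  qed
  show "integrable lborel (\<lambda>r. \<integral>\<tau>. norm (case_prod ?F (r, \<tau>)) \<partial>lborel)"
  proof (rule Bochner_Integration.integrable_bound)
    show "integrable lborel (\<lambda>r. indicator {0<..<s} r * (abel_weight a s t r * ?C))"
      using integrable_mult_left[OF set_integral_abel_weight_le(1)[OF order st, unfolded set_integrable_def], of ?C]
      by (simp add: mult_ac)
    show "AE r in lborel. norm (\<integral>\<tau>. norm (case_prod ?F (r, \<tau>)) \<partial>lborel)
        \<le> norm (indicator {0<..<s} r * (abel_weight a s t r * ?C))"
    proof (rule AE_I2)
      fix r
      have "0 \<le> indicator {0<..<s} r * (abel_weight a s t r * ?C)"
        using abel_weight_nonneg[of r t a s] st bound_nonneg order by (auto simp: indicator_def)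
      then have "norm (indicator {0<..<s} r * (abel_weight a s t r * ?C))
          = indicator {0<..<s} r * (abel_weight a s t r * ?C)"
        by (simp only: real_norm_def abs_of_nonneg)
      moreover have "0 \<le> (\<integral>\<tau>. norm (?F r \<tau>) \<partial>lborel)" by (rule integral_nonneg_AE) auto
      ultimately show "norm (\<integral>\<tau>. norm (case_prod ?F (r, \<tau>)) \<partial>lborel)
          \<le> norm (indicator {0<..<s} r * (abel_weight a s t r * ?C))"
        using inner_bound[of r] by simp
    qed
  qed measurable
  show "AE r in lborel. integrable lborel (\<lambda>\<tau>. case_prod ?F (r, \<tau>))"
  proof (rule AE_I2)
    fix r
    show "integrable lborel (\<lambda>\<tau>. case_prod ?F (r, \<tau>))"
    proof (cases "0 < r \<and> r < s")
      case True
      have "?F r = (\<lambda>\<tau>. abel_weight a s t r * (indicator {0<..<r} \<tau> *\<^sub>R ((r - \<tau>) powr (-a) * D \<tau>)))"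
        using True by (auto simp: abel_fubini_integrand_def indicator_def fun_eq_iff)
      then show ?thesis
        using set_integral_kernel_bound(1)[of 0 r] True
        unfolding set_integrable_def by (simp add: integrable_mult_right)
    next
      case False
      then show ?thesis by (simp add: abel_fubini_integrand_outside)
    qed
  qed
qed measurable

lemma abel_transform_weighted_identity:
  assumes st: "0 < s" "s < t"
  shows "set_integrable lborel {0<..<s} (\<lambda>r. abel_weight a s t r * abel_transform a D r)"
    "Beta (1 - a) a * (LBINT \<tau>:{0<..<s}. (t - \<tau>) powr (-a) * D \<tau>)
      = (LBINT r:{0<..<s}. abel_weight a s t r * abel_transform a D r)"
proof -
  let ?F = "abel_fubini_integrand a D s t"
  note integrable = integrable_abel_fubini_integrand[OF st]
  have inner_\<tau>: "(\<integral>\<tau>. ?F r \<tau> \<partial>lborel) = indicator {0<..<s} r * (abel_weight a s t r * abel_transform a D r)"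
    for r
  proof (cases "0 < r \<and> r < s")
    case True
    then have "(\<integral>\<tau>. ?F r \<tau> \<partial>lborel)
        = (\<integral>\<tau>. abel_weight a s t r * (indicator {0<..<r} \<tau> *\<^sub>R ((r - \<tau>) powr (-a) * D \<tau>)) \<partial>lborel)"
      by (intro Bochner_Integration.integral_cong) (auto simp: abel_fubini_integrand_def indicator_def)
    with True show ?thesis
      unfolding abel_transform_def set_lebesgue_integral_def by simp
  qed (simp add: abel_fubini_integrand_outside)
  have inner_r: "(\<integral>r. ?F r \<tau> \<partial>lborel) = indicator {0<..<s} \<tau> * (Beta (1 - a) a * ((t - \<tau>) powr (-a) * D \<tau>))"
    for \<tau>
  proof (cases "0 < \<tau> \<and> \<tau> < s")
    case True
    have "(\<integral>r. ?F r \<tau> \<partial>lborel)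
        = (\<integral>r. (indicator {\<tau><..<s} r *\<^sub>R (abel_weight a s t r * (r - \<tau>) powr (-a))) * D \<tau> \<partial>lborel)"
      using True by (intro Bochner_Integration.integral_cong) (auto simp: abel_fubini_integrand_def indicator_def)
    also have "\<dots> = (LBINT r:{\<tau><..<s}. abel_weight a s t r * (r - \<tau>) powr (-a)) * D \<tau>"
      unfolding set_lebesgue_integral_def by simp
    finally show ?thesis
      using True set_integral_abel_weight_kernel(2)[OF order _ st(2), of \<tau>] by simp
  next
    case False
    then have "(\<lambda>r. ?F r \<tau>) = (\<lambda>_. 0)" by (auto simp: abel_fubini_integrand_def fun_eq_iff)
    with False show ?thesis by simp
  qed
  show "set_integrable lborel {0<..<s} (\<lambda>r. abel_weight a s t r * abel_transform a D r)"
    using lborel_pair.integrable_fst'[OF integrable] unfolding set_integrable_def by (simp add: inner_\<tau>)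
  have "Beta (1 - a) a * (LBINT \<tau>:{0<..<s}. (t - \<tau>) powr (-a) * D \<tau>) = (\<integral>\<tau>. (\<integral>r. ?F r \<tau> \<partial>lborel) \<partial>lborel)"
    unfolding inner_r set_lebesgue_integral_def
    by (subst integral_mult_right_zero[symmetric]) (simp add: mult_ac)
  also have "\<dots> = (\<integral>r. (\<integral>\<tau>. ?F r \<tau> \<partial>lborel) \<partial>lborel)"
    by (rule lborel_pair.Fubini_integral) (use integrable in simp)
  also have "\<dots> = (LBINT r:{0<..<s}. abel_weight a s t r * abel_transform a D r)"
    unfolding inner_\<tau> set_lebesgue_integral_def by simp
  finally show "Beta (1 - a) a * (LBINT \<tau>:{0<..<s}. (t - \<tau>) powr (-a) * D \<tau>)
      = (LBINT r:{0<..<s}. abel_weight a s t r * abel_transform a D r)" .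
qed

lemma abel_transform_le_of_nonpos_tail:
  assumes st: "0 < s" "s < t"
    and tail: "AE x in lborel. x \<in> {s<..<t} \<longrightarrow> D x \<le> 0"
    and M: "0 \<le> M" "\<And>r. r \<in> {0<..<s} \<Longrightarrow> abel_transform a D r \<le> M"
  shows "abel_transform a D t \<le> (s / t) powr a * M"
proof -
  let ?Beta = "Beta (1 - a) a"
  note split = set_integral_Ioo_split[OF set_integral_kernel_bound(1)[of 0 t], of s]
  note weight = set_integral_abel_weight_le[OF order st]
  note identity = abel_transform_weighted_identity[OF st]
  have tail_nonpos: "(LBINT \<tau>:{s<..<t}. (t - \<tau>) powr (-a) * D \<tau>) \<le> 0"
  proof -
    have "(LBINT \<tau>:{s<..<t}. (t - \<tau>) powr (-a) * D \<tau>) \<le> (LBINT \<tau>:{s<..<t}. 0)"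
      using split(2) st tail by (intro set_integral_mono_AE)
        (auto simp: set_integrable_def elim!: eventually_mono intro: mult_nonneg_nonpos)
    then show ?thesis by simp
  qed
  have "?Beta * (LBINT \<tau>:{0<..<s}. (t - \<tau>) powr (-a) * D \<tau>)
      = (LBINT r:{0<..<s}. abel_weight a s t r * abel_transform a D r)"
    by (rule identity(2))
  also have "\<dots> \<le> (LBINT r:{0<..<s}. abel_weight a s t r * M)"
    using identity(1) weight(1) M st abel_weight_nonneg[of _ t a s]
    by (intro set_integral_mono set_integrable_mult_left mult_left_mono) auto
  also have "\<dots> = (LBINT r:{0<..<s}. abel_weight a s t r) * M" by simp
  also have "\<dots> \<le> ?Beta * (s / t) powr a * M"
    using weight(2) M(1) by (rule mult_right_mono)
  finally have "?Beta * (LBINT \<tau>:{0<..<s}. (t - \<tau>) powr (-a) * D \<tau>) \<le> ?Beta * ((s / t) powr a * M)"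
    by simp
  then have "(LBINT \<tau>:{0<..<s}. (t - \<tau>) powr (-a) * D \<tau>) \<le> (s / t) powr a * M"
    using Beta_pos_real[OF order] by simp
  moreover have "abel_transform a D t
      = (LBINT \<tau>:{0<..<s}. (t - \<tau>) powr (-a) * D \<tau>) + (LBINT \<tau>:{s<..<t}. (t - \<tau>) powr (-a) * D \<tau>)"
    unfolding abel_transform_def using split(3) st by simp
  ultimately show ?thesis
    using tail_nonpos by linarith
qed

lemma abel_transform_nonpos:
  assumes tail: "\<And>s t. 0 < s \<Longrightarrow> s < t \<Longrightarrow> t < T \<Longrightarrow> (\<And>r. r \<in> {s..t} \<Longrightarrow> 0 < abel_transform a D r)
      \<Longrightarrow> AE x in lborel. x \<in> {s<..<t} \<longrightarrow> D x \<le> 0"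
    and t: "0 \<le> t" "t < T"
  shows "abel_transform a D t \<le> 0"
proof (rule ccontr)
  let ?I = "abel_transform a D"
  assume "\<not> ?I t \<le> 0"
  then have pos: "0 < ?I t" by simp
  have cont: "continuous_on {0..t} ?I"
    by (rule continuous_on_subset[OF continuous_on_abel_transform]) auto
  obtain m where m: "m \<in> {0..t}" and max: "\<And>r. r \<in> {0..t} \<Longrightarrow> ?I r \<le> ?I m"
    using continuous_attains_sup[OF compact_Icc _ cont] t by auto
  have M: "0 < ?I m" using max[of t] pos t by auto
  then have "0 < m" using m by (cases "m = 0") auto
  obtain \<delta> where \<delta>: "0 < \<delta>" "\<And>r. r \<in> {0..t} \<Longrightarrow> dist r m < \<delta> \<Longrightarrow> dist (?I r) (?I m) < ?I m"
    using cont[unfolded continuous_on_iff] m M by metis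
  define s where "s = max (m / 2) (m - \<delta> / 2)"
  have s: "0 < s" "s < m" unfolding s_def using \<open>0 < m\<close> \<delta> by auto
  have "0 < ?I r" if "r \<in> {s..m}" for r
  proof -
    have "dist (?I r) (?I m) < ?I m"
      using that s m \<delta> by (intro \<delta>(2)) (auto simp: s_def dist_real_def)
    then show ?thesis by (auto simp: dist_real_def)
  qed
  then have "?I m \<le> (s / m) powr a * ?I m"
    using tail[OF s] m t max s less_imp_le[OF M]
    by (intro abel_transform_le_of_nonpos_tail) auto
  moreover have "(s / m) powr a < 1"
    using powr_less_mono2[of a "s / m" 1] s order by simp
  ultimately show False
    using M by (simp add: mult_le_cancel_right1)
qed

end

lemma W1inf_bounded_abel_transform:
  assumes "W1inf T z dz" "0 < a" "a < 1"
  obtains B where "bounded_abel_transform a B (\<lambda>x. indicator {0<..<T} x * dz x)"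
proof -
  from assms(1) obtain C where meas: "set_borel_measurable lborel {0<..<T} dz"
    and C: "AE t in lborel. t \<in> {0<..<T} \<longrightarrow> \<bar>dz t\<bar> \<le> C"
    unfolding W1inf_def by auto
  have "AE x in lborel. \<bar>indicator {0<..<T} x * dz x\<bar> \<le> max C 0"
    using C by eventually_elim (auto simp: indicator_def)
  with meas assms(2,3) have "bounded_abel_transform a (max C 0) (\<lambda>x. indicator {0<..<T} x * dz x)"
    unfolding bounded_abel_transform_def set_borel_measurable_def by simp
  then show ?thesis by (rule that)
qed

lemma caputo_eq_abel_transform:
  assumes "t \<le> T"
  shows "caputo a dz t = abel_transform a (\<lambda>x. indicator {0<..<T} x * dz x) t / Gamma (1 - a)"
proof -
  have "(LBINT \<tau>:{0<..<t}. (t - \<tau>) powr (-a) * dz \<tau>)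
      = abel_transform a (\<lambda>x. indicator {0<..<T} x * dz x) t"
    unfolding abel_transform_def using assms by (intro set_lebesgue_integral_cong) auto
  then show ?thesis unfolding caputo_def by simp
qed

theorem lemma4p3:
  fixes \<alpha> lam p0 p1 T :: real and p z dz :: "real \<Rightarrow> real"
  assumes "0 < \<alpha>" "\<alpha> < 1" "lam > 0" "T > 0" "p0 > 0" "p1 > 0"
    and "set_borel_measurable lborel {0<..<T} p"
    and "AE t in lborel. t \<in> {0<..<T} \<longrightarrow> p0 \<le> p t \<and> p t \<le> p1"
    and "W1inf T z dz"
    and "\<forall>t\<in>{0<..<T}. z t \<ge> 0"
    and "AE t in lborel. t \<in> {0<..<T} \<longrightarrow> dz t + p t * caputo \<alpha> dz t + lam * z t \<le> 0"
  shows "\<forall>t\<in>{0<..<T}. caputo \<alpha> dz t \<le> 0"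
proof -
  define D where "D x = indicator {0<..<T} x * dz x" for x
  obtain B where "bounded_abel_transform \<alpha> B D"
    using W1inf_bounded_abel_transform[OF assms(9,1,2)] unfolding D_def by blast
  then interpret bounded_abel_transform \<alpha> B D .
  have Gamma: "0 < Gamma (1 - \<alpha>)" using assms(2) by simp
  have caputo: "caputo \<alpha> dz t = abel_transform \<alpha> D t / Gamma (1 - \<alpha>)" if "t < T" for t
    using caputo_eq_abel_transform[of t T \<alpha> dz] that unfolding D_def by simp
  have "AE x in lborel. x \<in> {s<..<t} \<longrightarrow> D x \<le> 0"
    if st: "0 < s" "s < t" "t < T" and pos: "\<And>r. r \<in> {s..t} \<Longrightarrow> 0 < abel_transform \<alpha> D r" for s t
    using assms(8,11)
  proof eventually_elim
    case (elim x)
    show ?case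
    proof
      assume x: "x \<in> {s<..<t}"
      then have "0 < caputo \<alpha> dz x" and "0 \<le> lam * z x" and "p0 \<le> p x"
        using caputo[of x] pos[of x] Gamma st elim assms(3,10) by auto
      then have "0 \<le> p x * caputo \<alpha> dz x" using assms(5) by simp
      then show "D x \<le> 0"
        using elim x st \<open>0 \<le> lam * z x\<close> by (auto simp: D_def)
    qed
  qed
  then show ?thesis
    using abel_transform_nonpos[of T] caputo Gamma by (auto simp: divide_le_0_iff)
qed

end
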